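(* Every leafless directed forest thinner than a forkless directed forest is forkless.
   Context: A directed forest is a pair $\mathcal{T}=(V,\mathsf{p})$ where $V$ is a nonempty set and $\mathsf{p}\colon V\to V$ satisfies: if $n\in\mathbb{N}$, $v\in V$ and $\mathsf{p}^n(v)=v$, then $\mathsf{p}(v)=v$. Roots: $\mathrm{root}(\mathcal{T})=\{v:\mathsf{p}(v)=v\}$, $V^\circ=V\setminus\mathrm{root}(\mathcal{T})$. Children: $\mathrm{Chi}(v)=\{u:\mathsf{p}(u)=v\neq u\}$, $\deg(v)=|\mathrm{Chi}(v)|$. $\mathcal{T}$ is leafless if $\mathsf{p}(V)=V$, and forkless if $\deg(v)=1$ for every $v\in V^\circ$. $(V,\mathsf{p}_1)$ is thinner than $(V,\mathsf{p}_2)$ if $\mathsf{p}_1(v)\in\{v,\mathsf{p}_2(v)\}$ for all $v\in V$. *)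

theory Defs
  imports Main
begin

text \<open>A directed forest (V, p): V nonempty, p maps V into V, and every periodic
  point of p is a fixed point. Functions are total in HOL; only their values on V matter.\<close>
definition directed_forest :: "'a set \<Rightarrow> ('a \<Rightarrow> 'a) \<Rightarrow> bool" where
  "directed_forest V p \<longleftrightarrow> V \<noteq> {} \<and> (\<forall>v\<in>V. p v \<in> V) \<and>
     (\<forall>n::nat. n \<ge> 1 \<longrightarrow> (\<forall>v\<in>V. (p ^^ n) v = v \<longrightarrow> p v = v))"

definition roots :: "'a set \<Rightarrow> ('a \<Rightarrow> 'a) \<Rightarrow> 'a set" where
  "roots V p = {v\<in>V. p v = v}"

definition nonroots :: "'a set \<Rightarrow> ('a \<Rightarrow> 'a) \<Rightarrow> 'a set" where
  "nonroots V p = V - roots V p"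

definition Chi :: "'a set \<Rightarrow> ('a \<Rightarrow> 'a) \<Rightarrow> 'a \<Rightarrow> 'a set" where
  "Chi V p v = {u\<in>V. p u = v \<and> v \<noteq> u}"

definition leafless :: "'a set \<Rightarrow> ('a \<Rightarrow> 'a) \<Rightarrow> bool" where
  "leafless V p \<longleftrightarrow> p ` V = V"

definition forkless :: "'a set \<Rightarrow> ('a \<Rightarrow> 'a) \<Rightarrow> bool" where
  "forkless V p \<longleftrightarrow> (\<forall>v\<in>nonroots V p. card (Chi V p v) = 1)"

definition thinner :: "'a set \<Rightarrow> ('a \<Rightarrow> 'a) \<Rightarrow> ('a \<Rightarrow> 'a) \<Rightarrow> bool" where
  "thinner V p1 p2 \<longleftrightarrow> (\<forall>v\<in>V. p1 v \<in> {v, p2 v})"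

end

theory Submission
  imports Defs
begin

(* Thinning only turns edges into loops, so a non-root of p1 keeps its p2-parent and its
   p1-children are among its p2-children, of which there is exactly one; leaflessness of p1
   supplies at least one. *)

lemma thinner_nonroot_parent_eq:
  assumes "thinner V p1 p2" and "v \<in> V" and "p1 v \<noteq> v"
  shows "p1 v = p2 v"
  using assms by (auto simp: thinner_def)

lemma thinner_nonroots_subset:
  assumes "thinner V p1 p2"
  shows "nonroots V p1 \<subseteq> nonroots V p2"
  using assms thinner_nonroot_parent_eq by (fastforce simp: nonroots_def roots_def)

lemma thinner_Chi_subset:
  assumes "thinner V p1 p2"
  shows "Chi V p1 v \<subseteq> Chi V p2 v"
  using assms thinner_nonroot_parent_eq by (fastforce simp: Chi_def)

lemma leafless_Chi_nonroot_nonempty: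
  assumes "leafless V p" and "v \<in> nonroots V p"
  shows "Chi V p v \<noteq> {}"
proof -
  from assms have "v \<in> V" and "p v \<noteq> v" by (auto simp: nonroots_def roots_def)
  with assms(1) obtain u where "u \<in> V" and "p u = v" unfolding leafless_def by (metis imageE)
  with \<open>p v \<noteq> v\<close> have "u \<in> Chi V p v" by (auto simp: Chi_def)
  then show ?thesis by blast
qed

lemma card_eq_1_if_nonempty_subset:
  assumes "card B = 1" and "A \<subseteq> B" and "A \<noteq> {}"
  shows "card A = 1"
  using assms by (metis card_1_singletonE subset_singletonD)

theorem lemma5p3:
  fixes V :: "'a set" and p1 p2 :: "'a \<Rightarrow> 'a"
  assumes "directed_forest V p1" and "directed_forest V p2"
    and "leafless V p1" and "forkless V p2" and "thinner V p1 p2"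
  shows "forkless V p1"
  unfolding forkless_def
proof
  fix v assume v: "v \<in> nonroots V p1"
  with assms(5) have "v \<in> nonroots V p2" using thinner_nonroots_subset by blast
  with assms(4) have "card (Chi V p2 v) = 1" by (simp add: forkless_def)
  moreover have "Chi V p1 v \<subseteq> Chi V p2 v" using assms(5) by (rule thinner_Chi_subset)
  moreover have "Chi V p1 v \<noteq> {}" using assms(3) v by (rule leafless_Chi_nonroot_nonempty)
  ultimately show "card (Chi V p1 v) = 1" by (rule card_eq_1_if_nonempty_subset)
qed

end
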